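(* Let $d\ge2$, $\nu=e^{2\pi i/d}$, and $0<r\le1$. Let $p\in\mathcal P_d$, $p(z)=\sum_{j=0}^{d-1}c_jz^j$, and suppose there exists $z_0$ with $|z_0|=1$ such that $|\nu^jz_0-w|\ge r$ for every $j\in\{1,\dots,d\}$ and every root $w$ of every nonzero truncation of $p$. Then for all $j\in\{1,\dots,d\}$, $$|p(\nu^jz_0)|\ge\frac{r^{\frac{(d-1)d}{2}}\left(\frac{d-1}{2d}\right)^d\frac{2}{d-1}}{\prod_{k=0}^{d-1}(r^k+1)}\,\|\hat p\|_1,$$ where $\|\hat p\|_1=\sum_{j=0}^{d-1}|c_j|$.
   Context: $\mathcal P_d$ is the space of complex polynomials of degree at most $d-1$. For $p(z)=\sum_{j=0}^{d-1}c_jz^j$ and $n\in\{1,\dots,d\}$, the $n$-th truncation of $p$ is $p_n(z)=\sum_{j=0}^{n-1}c_jz^j$. *)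

theory Defs
  imports "HOL-Analysis.Analysis"
begin

text \<open>A polynomial in P_d is represented by its coefficient sequence c, of which only
  c 0, ..., c (d-1) are used.\<close>

definition poly_eval :: "nat \<Rightarrow> (nat \<Rightarrow> complex) \<Rightarrow> complex \<Rightarrow> complex" where
  "poly_eval d c z = (\<Sum>j<d. c j * z ^ j)"

definition trunc_eval :: "nat \<Rightarrow> (nat \<Rightarrow> complex) \<Rightarrow> complex \<Rightarrow> complex" where
  "trunc_eval n c z = (\<Sum>j<n. c j * z ^ j)"

definition trunc_nonzero :: "nat \<Rightarrow> (nat \<Rightarrow> complex) \<Rightarrow> bool" where
  "trunc_nonzero n c \<longleftrightarrow> (\<exists>j<n. c j \<noteq> 0)"

definition l1_coeff_norm :: "nat \<Rightarrow> (nat \<Rightarrow> complex) \<Rightarrow> real" where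
  "l1_coeff_norm d c = (\<Sum>j<d. cmod (c j))"

end

theory Submission
  imports Defs "HOL-Computational_Algebra.Fundamental_Theorem_Algebra"
begin

text \<open>Induction on the length n of the truncation, at a point z with |z| = 1. Write
  p_{n+1}(z) = p_n(z) + c_n z^n. The triangle inequality gives
  |p_{n+1}(z)| \<ge> K_n \<Sigma>_{j<n} |c_j| - |c_n|, while factoring p_{n+1} over its roots, all at
  distance \<ge> r from z, gives |p_{n+1}(z)| \<ge> |c_n| r^n. A weighted combination eliminates |c_n|
  and yields the bound with K_{n+1} = r^n K_n / (2 (1 + r^n)), whose closed form dominates the
  constant of the theorem.\<close>

lemma norm_poly_ge_lead_coeff_root_distance:
  fixes p :: "complex poly"
  assumes "0 \<le> r" and root_far: "\<And>w. poly p w = 0 \<Longrightarrow> r \<le> cmod (z - w)"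
  shows "cmod (lead_coeff p) * r ^ degree p \<le> cmod (poly p z)"
proof (cases "p = 0")
  case False
  obtain root where p: "smult (lead_coeff p) (\<Prod>i<degree p. [:-root i, 1:]) = p"
    by (rule complex_poly_decompose')
  have poly_p: "poly p x = lead_coeff p * (\<Prod>i<degree p. x - root i)" for x
    by (subst p [symmetric]) (simp add: poly_prod)
  have "r \<le> cmod (z - root i)" if "i < degree p" for i
    using that False by (intro root_far) (auto simp: poly_p)
  then have "r ^ degree p \<le> (\<Prod>i<degree p. cmod (z - root i))"
    using prod_mono[of "{..<degree p}" "\<lambda>_. r"] \<open>0 \<le> r\<close> by simp
  then show ?thesis
    by (simp add: poly_p norm_mult prod_norm mult_left_mono)
qed simp

definition trunc_poly :: "nat \<Rightarrow> (nat \<Rightarrow> complex) \<Rightarrow> complex poly" where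
  "trunc_poly n c = (\<Sum>i<n. monom (c i) i)"

lemma coeff_trunc_poly: "coeff (trunc_poly n c) i = (if i < n then c i else 0)"
  by (simp add: trunc_poly_def coeff_sum coeff_monom)

lemma poly_trunc_poly: "poly (trunc_poly n c) z = trunc_eval n c z"
  by (simp add: trunc_poly_def trunc_eval_def poly_sum poly_monom)

lemma degree_trunc_poly: "c n \<noteq> 0 \<Longrightarrow> degree (trunc_poly (Suc n) c) = n"
  by (intro antisym degree_le le_degree) (auto simp: coeff_trunc_poly)

lemma norm_trunc_eval_ge_last_coeff:
  assumes "0 \<le> r"
    and root_far: "\<And>w. trunc_nonzero (Suc n) c \<Longrightarrow> trunc_eval (Suc n) c w = 0 \<Longrightarrow> r \<le> cmod (z - w)"
  shows "cmod (c n) * r ^ n \<le> cmod (trunc_eval (Suc n) c z)"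
proof (cases "c n = 0")
  case False
  then have "trunc_nonzero (Suc n) c"
    by (auto simp: trunc_nonzero_def)
  with False root_far show ?thesis
    using norm_poly_ge_lead_coeff_root_distance[OF \<open>0 \<le> r\<close>, of "trunc_poly (Suc n) c" z]
    by (simp add: degree_trunc_poly coeff_trunc_poly poly_trunc_poly)
qed simp

fun trunc_const :: "real \<Rightarrow> nat \<Rightarrow> real" where
  "trunc_const r 0 = 1"
| "trunc_const r (Suc n) = r ^ n * trunc_const r n / (2 * (1 + r ^ n))"

lemma trunc_const_pos: "0 < r \<Longrightarrow> 0 < trunc_const r n"
  by (induction n) (auto intro!: divide_pos_pos add_pos_pos)

lemma trunc_const_le_one: "0 < r \<Longrightarrow> trunc_const r n \<le> 1"
proof (induction n)
  case (Suc n)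
  have "r ^ n * trunc_const r n \<le> (2 * (1 + r ^ n)) * 1"
    using Suc trunc_const_pos[of r n] by (intro mult_mono) auto
  with Suc.prems show ?case
    by (simp add: divide_le_eq add_pos_pos)
qed simp

lemma trunc_const_closed_form:
  "trunc_const r n = r ^ (n * (n - 1) div 2) / (2 ^ n * (\<Prod>k<n. 1 + r ^ k))"
proof (induction n)
  case (Suc n)
  have "Suc n * (Suc n - 1) div 2 = n * (n - 1) div 2 + n"
    by (cases n) auto
  with Suc show ?case
    by (simp add: power_add field_simps)
qed simp

lemma lower_bound_from_two_estimates:
  fixes a b k p \<rho> :: real
  assumes "0 < \<rho>" "0 \<le> k" "k \<le> 1 + \<rho>" "0 \<le> p"
    and "k * b - a \<le> p" "a * \<rho> \<le> p"
  shows "\<rho> * k * (a + b) / (2 * (1 + \<rho>)) \<le> p"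
proof -
  have "\<rho> * k * (a + b) = (1 + k) * (a * \<rho>) + \<rho> * (k * b - a)"
    by (simp add: algebra_simps)
  also have "\<dots> \<le> (1 + k) * p + \<rho> * p"
    using assms by (intro add_mono mult_left_mono) auto
  also have "\<dots> \<le> 2 * (1 + \<rho>) * p"
    using mult_right_mono[OF \<open>k \<le> 1 + \<rho>\<close> \<open>0 \<le> p\<close>] by (simp add: algebra_simps)
  finally show ?thesis
    using assms by (simp add: divide_le_eq mult.commute)
qed

lemma trunc_const_mult_l1_le_trunc_eval:
  assumes "cmod z = 1" "0 < r"
    and root_far: "\<And>m w. 1 \<le> m \<Longrightarrow> m \<le> n \<Longrightarrow> trunc_nonzero m c \<Longrightarrow> trunc_eval m c w = 0
                   \<Longrightarrow> r \<le> cmod (z - w)"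
  shows "trunc_const r n * (\<Sum>j<n. cmod (c j)) \<le> cmod (trunc_eval n c z)"
  using root_far
proof (induction n)
  case 0
  show ?case by (simp add: trunc_eval_def)
next
  case (Suc n)
  have split: "trunc_eval (Suc n) c z = trunc_eval n c z + c n * z ^ n"
    by (simp add: trunc_eval_def)
  have "trunc_const r n * (\<Sum>j<n. cmod (c j)) \<le> cmod (trunc_eval n c z)"
    using Suc by simp
  also have "\<dots> \<le> cmod (trunc_eval (Suc n) c z) + cmod (c n)"
    using norm_triangle_ineq4[of "trunc_eval (Suc n) c z" "c n * z ^ n"] \<open>cmod z = 1\<close>
    by (simp add: split norm_mult norm_power)
  finally have previous: "trunc_const r n * (\<Sum>j<n. cmod (c j)) - cmod (c n)
      \<le> cmod (trunc_eval (Suc n) c z)"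
    by simp
  have last: "cmod (c n) * r ^ n \<le> cmod (trunc_eval (Suc n) c z)"
    using \<open>0 < r\<close> Suc.prems by (intro norm_trunc_eval_ge_last_coeff) auto
  have "trunc_const r n \<le> 1 + r ^ n"
    using trunc_const_le_one[OF \<open>0 < r\<close>, of n] \<open>0 < r\<close> by (simp add: add_increasing2)
  then have "r ^ n * trunc_const r n * (cmod (c n) + (\<Sum>j<n. cmod (c j))) / (2 * (1 + r ^ n))
      \<le> cmod (trunc_eval (Suc n) c z)"
    using \<open>0 < r\<close> trunc_const_pos[of r n] previous last
    by (intro lower_bound_from_two_estimates) auto
  then show ?case
    by (simp add: add.commute)
qed

lemma power_ratio_mult_le_one:
  fixes d :: nat
  assumes "d \<ge> 2"
  shows "((real d - 1) / real d) ^ d * (2 / (real d - 1)) \<le> 1"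
proof -
  have "((real d - 1) / real d) ^ d \<le> ((real d - 1) / real d) ^ 1"
    using assms by (intro power_decreasing) auto
  then have "((real d - 1) / real d) ^ d * (2 / (real d - 1))
      \<le> (real d - 1) / real d * (2 / (real d - 1))"
    using assms by (intro mult_right_mono) auto
  also have "\<dots> = 2 / real d"
    using assms by (simp add: field_simps)
  also have "\<dots> \<le> 1"
    using assms by simp
  finally show ?thesis .
qed

lemma theorem_const_le_trunc_const:
  fixes d :: nat
  assumes "d \<ge> 2" "0 < r"
  shows "(r ^ ((d - 1) * d div 2) * ((real d - 1) / (2 * real d)) ^ d * (2 / (real d - 1)))
       / (\<Prod>k<d. r ^ k + 1) \<le> trunc_const r d"
proof -
  have "(r ^ ((d - 1) * d div 2) * ((real d - 1) / (2 * real d)) ^ d * (2 / (real d - 1)))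
       / (\<Prod>k<d. r ^ k + 1)
      = r ^ (d * (d - 1) div 2) * (((real d - 1) / real d) ^ d * (2 / (real d - 1)))
        / (2 ^ d * (\<Prod>k<d. 1 + r ^ k))"
    by (simp add: power_divide power_mult_distrib mult_ac add.commute)
  also have "\<dots> \<le> r ^ (d * (d - 1) div 2) * 1 / (2 ^ d * (\<Prod>k<d. 1 + r ^ k))"
    using assms power_ratio_mult_le_one[OF assms(1)]
    by (intro divide_right_mono mult_left_mono mult_nonneg_nonneg prod_nonneg) auto
  finally show ?thesis
    by (simp add: trunc_const_closed_form)
qed

theorem mainTheorem8:
  fixes d :: nat and r :: real and c :: "nat \<Rightarrow> complex" and z0 :: complex
  defines "\<nu> \<equiv> exp (2 * pi * \<i> / of_nat d)"
  assumes "d \<ge> 2" and "0 < r" and "r \<le> 1"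
    and "cmod z0 = 1"
    and "\<forall>j\<in>{1..d}. \<forall>n\<in>{1..d}. \<forall>w. trunc_nonzero n c \<and> trunc_eval n c w = 0
            \<longrightarrow> cmod (\<nu> ^ j * z0 - w) \<ge> r"
  shows "\<forall>j\<in>{1..d}. cmod (poly_eval d c (\<nu> ^ j * z0)) \<ge>
     (r ^ ((d - 1) * d div 2) * ((real d - 1) / (2 * real d)) ^ d * (2 / (real d - 1)))
       / (\<Prod>k<d. r ^ k + 1) * l1_coeff_norm d c"
proof
  fix j assume j: "j \<in> {1..d}"
  have "cmod (\<nu> ^ j * z0) = 1"
    using \<open>cmod z0 = 1\<close> by (simp add: \<nu>_def norm_mult norm_power)
  then have "trunc_const r d * l1_coeff_norm d c \<le> cmod (poly_eval d c (\<nu> ^ j * z0))"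
    unfolding l1_coeff_norm_def poly_eval_def trunc_eval_def [symmetric]
    using assms(3,6) j by (intro trunc_const_mult_l1_le_trunc_eval) auto
  moreover have "0 \<le> l1_coeff_norm d c"
    by (simp add: l1_coeff_norm_def sum_nonneg)
  ultimately show "cmod (poly_eval d c (\<nu> ^ j * z0)) \<ge>
     (r ^ ((d - 1) * d div 2) * ((real d - 1) / (2 * real d)) ^ d * (2 / (real d - 1)))
       / (\<Prod>k<d. r ^ k + 1) * l1_coeff_norm d c"
    using theorem_const_le_trunc_const[OF assms(2,3)] by (meson mult_right_mono order.trans)
qed

end
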